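(* Let $X$ be a compact metric space, $Y\subseteq\mathbb{R}$, and $\rho$ a Borel probability measure on $X\times Y$ with marginal $\rho_X$ (such that the error quantities below are finite). Let $K:X\times X\to\mathbb{R}$ be a positive-definite reproducing kernel on $X$ with $K(\cdot,x)\in C(X)$, such that the closed linear span of $\{K(\cdot,x):x\in X\}$ in $C(X)$ equals $C(X)$, and such that for every $m$ and every pairwise distinct ${\bf x}=(x_1,\dots,x_m)$ in $X$, $\|K[{\bf x}]^{-1}K_{\bf x}(x)\|_1\le 1$ for all $x\in X$, where $(K[{\bf x}])_{j,k}=K(x_k,x_j)$ and $K_{\bf x}(x)=(K(x,x_j))_{j=1}^m$. Let $\mathcal{B}=\{f_\mu=\int_X K(t,\cdot)\,d\mu(t):\mu\in\mathcal{M}(X)\}$ with $\|f_\mu\|_{\mathcal B}=\|\mu\|$ (total variation), $\mathcal{M}(X)$ being the signed Borel measures on $X$ of bounded total variation. Let ${\bf z}=\{(x_j,y_j)\}_{j=1}^m\subseteq X\times Y$ with $x_j$ pairwise distinct, $\lambda>0$, let $\boldsymbol{c}_{{\bf z},\lambda}$ minimize $\frac1m\sum_{j=1}^m|K^{\bf x}(x_j)\boldsymbol{c}-y_j|^2+\lambda\|\boldsymbol{c}\|_1$ over $\boldsymbol{c}\in\mathbb{R}^m$, where $K^{\bf x}(x)=(K(x_j,x))_{j=1}^m$ (row vector), and $f_{{\bf z},\lambda}=K^{\bf x}(\cdot)\boldsymbol{c}_{{\bf z},\lambda}$. Then for all $g\in\mathcal{B}$, $$\mathcal{E}(f_{{\bf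 z},\lambda})-\mathcal{E}(f_\rho)\le\mathcal{S}({\bf z},\lambda,g)+\mathcal{D}(\lambda,g).$$
   Context: $\mathcal{E}(f)=\int_{X\times Y}|f(x)-y|^2\,d\rho$, $\mathcal{E}_{\bf z}(f)=\frac1m\sum_{j=1}^m(f(x_j)-y_j)^2$, $f_\rho(x)=\int_Y y\,d\rho(y|x)$ is the regression function. The sampling error is $\mathcal{S}({\bf z},\lambda,g)=\mathcal{E}(f_{{\bf z},\lambda})-\mathcal{E}_{\bf z}(f_{{\bf z},\lambda})+\mathcal{E}_{\bf z}(g)-\mathcal{E}(g)$ and the regularization error is $\mathcal{D}(\lambda,g)=\mathcal{E}(g)-\mathcal{E}(f_\rho)+\lambda\|g\|_{\mathcal B}$. *)

theory Defs
  imports "HOL-Probability.Probability"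
begin

text \<open>Vectors in R^m and samples of size m are represented by functions
  on nat, only the indices below m being relevant.\<close>

definition pd_kernel :: "'a set \<Rightarrow> ('a \<Rightarrow> 'a \<Rightarrow> real) \<Rightarrow> bool" where
  "pd_kernel X K \<longleftrightarrow>
     (\<forall>x\<in>X. \<forall>y\<in>X. K x y = K y x) \<and>
     (\<forall>(m::nat) (xs::nat \<Rightarrow> 'a) (c::nat \<Rightarrow> real).
        (\<forall>i<m. xs i \<in> X) \<longrightarrow> inj_on xs {..<m} \<longrightarrow> (\<exists>i<m. c i \<noteq> 0) \<longrightarrow>
        (\<Sum>i<m. \<Sum>j<m. c i * c j * K (xs i) (xs j)) > 0)"

definition kernel_span_dense :: "'a::topological_space set \<Rightarrow> ('a \<Rightarrow> 'a \<Rightarrow> real) \<Rightarrow> bool" where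
  "kernel_span_dense X K \<longleftrightarrow>
     (\<forall>f. continuous_on X f \<longrightarrow> (\<forall>e>0. \<exists>(n::nat) (ts::nat \<Rightarrow> 'a) (a::nat \<Rightarrow> real).
        (\<forall>i<n. ts i \<in> X) \<and> (\<forall>x\<in>X. \<bar>f x - (\<Sum>i<n. a i * K x (ts i))\<bar> < e)))"

text \<open>For distinct xs and t in X, v = K[x]^{-1} K_x(t) is the solution of
  K[x] v = K_x(t), with (K[x])_{j,k} = K(x_k,x_j), K_x(t)_j = K(t,x_j);
  the condition is ||v||_1 <= 1.\<close>
definition kernel_l1_condition :: "'a set \<Rightarrow> ('a \<Rightarrow> 'a \<Rightarrow> real) \<Rightarrow> bool" where
  "kernel_l1_condition X K \<longleftrightarrow>
     (\<forall>(m::nat) (xs::nat \<Rightarrow> 'a). (\<forall>i<m. xs i \<in> X) \<longrightarrow> inj_on xs {..<m} \<longrightarrow>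
        (\<forall>t\<in>X. \<forall>v::nat \<Rightarrow> real.
           (\<forall>j<m. (\<Sum>k<m. K (xs k) (xs j) * v k) = K t (xs j)) \<longrightarrow> (\<Sum>k<m. \<bar>v k\<bar>) \<le> 1))"

definition gen_err :: "('a \<times> real) measure \<Rightarrow> ('a \<Rightarrow> real) \<Rightarrow> real" where
  "gen_err \<rho> f = (\<integral>z. (f (fst z) - snd z)\<^sup>2 \<partial>\<rho>)"

definition emp_err :: "nat \<Rightarrow> (nat \<Rightarrow> 'a) \<Rightarrow> (nat \<Rightarrow> real) \<Rightarrow> ('a \<Rightarrow> real) \<Rightarrow> real" where
  "emp_err m xs ys f = (1 / real m) * (\<Sum>j<m. (f (xs j) - ys j)\<^sup>2)"

text \<open>f is the regression function f_rho(x) = int y d rho(y|x), characterised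
  as the (conditional expectation) version: Borel on X, and
  int_{B x Y} y d rho = int_{B x Y} f(x) d rho for all Borel B.\<close>
definition regression_fun :: "'a::topological_space set \<Rightarrow> ('a \<times> real) measure \<Rightarrow> ('a \<Rightarrow> real) \<Rightarrow> bool" where
  "regression_fun X \<rho> f \<longleftrightarrow>
     f \<in> borel_measurable (restrict_space borel X) \<and>
     integrable \<rho> (\<lambda>z. f (fst z)) \<and>
     (\<forall>B \<in> sets borel. (\<integral>z. indicator B (fst z) * snd z \<partial>\<rho>) = (\<integral>z. indicator B (fst z) * f (fst z) \<partial>\<rho>))"

text \<open>f_mu for a signed measure mu = mu_p - mu_n (Jordan decomposition).\<close>
definition kernel_fun :: "('a \<Rightarrow> 'a \<Rightarrow> real) \<Rightarrow> 'a measure \<Rightarrow> 'a measure \<Rightarrow> 'a \<Rightarrow> real" where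
  "kernel_fun K \<mu>p \<mu>n = (\<lambda>x. (\<integral>t. K t x \<partial>\<mu>p) - (\<integral>t. K t x \<partial>\<mu>n))"

definition sampling_error where
  "sampling_error \<rho> m xs ys fz g =
     gen_err \<rho> fz - emp_err m xs ys fz + emp_err m xs ys g - gen_err \<rho> g"

definition regularization_error where
  "regularization_error \<rho> f\<rho> (lam::real) g normg = gen_err \<rho> g - gen_err \<rho> f\<rho> + lam * normg"

end

theory Submission
  imports Defs "Jordan_Normal_Form.Determinant"
begin

text \<open>The only property of g that matters is its restriction to the sample points.
  Write K[x] v(t) = K_x(t) for the interpolation coefficients v(t) of K(t,.); they
  depend continuously on t and, by the l1 condition, have l1 norm at most 1. Integrating
  them against mu gives a coefficient vector c' with K^x(x_j) c' = g(x_j) for all j and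
  ||c'||_1 \<le> ||mu||. Comparing the penalized empirical error of the minimizer with that
  of c' yields E_z(f_z) \<le> E_z(g) + lam ||mu||, and the claimed inequality is a
  rearrangement of this.\<close>

lemma square_system_right_inverse:
  fixes M :: "nat \<Rightarrow> nat \<Rightarrow> real"
  assumes inj: "\<And>c. \<forall>j<m. (\<Sum>k<m. M j k * c k) = 0 \<Longrightarrow> \<forall>k<m. c k = 0"
  shows "\<exists>u. \<forall>l<m. \<forall>j<m. (\<Sum>k<m. M j k * u l k) = (if j = l then 1 else 0)"
proof -
  define A where "A = mat m m (\<lambda>(j,k). M j k)"
  have A: "A \<in> carrier_mat m m" unfolding A_def by simp
  have "det A \<noteq> 0"
  proof
    assume "det A = 0"
    then obtain v where v: "v \<in> carrier_vec m" "v \<noteq> 0\<^sub>v m" "A *\<^sub>v v = 0\<^sub>v m"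
      using det_0_iff_vec_prod_zero[OF A] by blast
    have "\<forall>j<m. (\<Sum>k<m. M j k * v $ k) = 0"
    proof (intro allI impI)
      fix j assume j: "j < m"
      have "(A *\<^sub>v v) $ j = 0" using v(3) j by simp
      then show "(\<Sum>k<m. M j k * v $ k) = 0"
        using j v(1) by (simp add: A_def scalar_prod_def lessThan_atLeast0)
    qed
    from inj[OF this] have "v = 0\<^sub>v m" using v(1) by (intro eq_vecI) auto
    with v(2) show False by simp
  qed
  from det_non_zero_imp_unit[OF A this, of "()"]
  obtain B where B: "B \<in> carrier_mat m m" "A * B = 1\<^sub>m m"
    unfolding Units_def ring_mat_def by auto
  show ?thesis
  proof (intro exI allI impI)
    fix l j assume l: "l < m" and j: "j < m"
    have "(A * B) $$ (j,l) = (if j = l then 1 else 0)" using B(2) j l by simp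
    then show "(\<Sum>k<m. M j k * B $$ (k,l)) = (if j = l then 1 else 0)"
      using j l B(1) by (simp add: A_def scalar_prod_def lessThan_atLeast0)
  qed
qed

lemma pd_kernel_gram_injective:
  fixes m :: nat and c :: "nat \<Rightarrow> real"
  assumes "pd_kernel X K" "\<forall>i<m. xs i \<in> X" "inj_on xs {..<m}"
    and zero: "\<forall>j<m. (\<Sum>k<m. K (xs k) (xs j) * c k) = 0"
  shows "\<forall>k<m. c k = 0"
proof (rule ccontr)
  assume "\<not> (\<forall>k<m. c k = 0)"
  then have "(\<Sum>i<m. \<Sum>j<m. c i * c j * K (xs i) (xs j)) > 0"
    using assms(1)[unfolded pd_kernel_def, THEN conjunct2, rule_format, of m xs c] assms(2,3)
    by auto
  moreover have "(\<Sum>i<m. \<Sum>j<m. c i * c j * K (xs i) (xs j))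
      = (\<Sum>j<m. c j * (\<Sum>i<m. K (xs i) (xs j) * c i))"
    by (subst sum.swap) (simp add: sum_distrib_left mult_ac)
  ultimately show False using zero by simp
qed

text \<open>The coefficients are v k t = \<Sum>l u l k * K t (x_l) for the inverse u of the Gram
  matrix, hence continuous in t.\<close>

lemma pd_kernel_interpolation_coefficients:
  fixes m :: nat
  assumes "pd_kernel X K" "\<forall>i<m. xs i \<in> X" "inj_on xs {..<m}"
    and Kcont: "\<forall>x\<in>X. continuous_on X (\<lambda>t. K t x)"
  obtains v where "\<And>k. continuous_on X (v k)"
    and "\<And>j t. j < m \<Longrightarrow> (\<Sum>k<m. K (xs k) (xs j) * v k t) = K t (xs j)"
proof -
  obtain u where u: "\<forall>l<m. \<forall>j<m. (\<Sum>k<m. K (xs k) (xs j) * u l k) = (if j = l then 1 else 0)"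
    using square_system_right_inverse[of m "\<lambda>j k. K (xs k) (xs j)"]
      pd_kernel_gram_injective[OF assms(1-3)] by blast
  define v where "v k t = (\<Sum>l<m. u l k * K t (xs l))" for k t
  have "continuous_on X (\<lambda>t. K t (xs l))" if "l < m" for l
    using Kcont assms(2) that by auto
  then have "continuous_on X (v k)" for k
    unfolding v_def by (intro continuous_on_sum continuous_on_mult_left) auto
  moreover have "(\<Sum>k<m. K (xs k) (xs j) * v k t) = K t (xs j)" if j: "j < m" for j t
  proof -
    have "(\<Sum>k<m. K (xs k) (xs j) * v k t)
        = (\<Sum>l<m. K t (xs l) * (\<Sum>k<m. K (xs k) (xs j) * u l k))"
      unfolding v_def sum_distrib_left by (subst sum.swap) (simp add: mult_ac)
    also have "\<dots> = (\<Sum>l<m. K t (xs l) * (if j = l then 1 else 0))"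
      using u j by (intro sum.cong) auto
    also have "\<dots> = K t (xs j)" using j by (simp add: if_distrib cong: if_cong)
    finally show ?thesis .
  qed
  ultimately show thesis by (rule that)
qed

lemma space_eq_of_sets_restrict_borel:
  assumes "sets \<mu> = sets (restrict_space borel X)"
  shows "space \<mu> = X"
  using sets_eq_imp_space_eq[OF assms] by (simp add: space_restrict_space)

lemma integrable_continuous_on_compact:
  fixes f :: "'a::metric_space \<Rightarrow> real"
  assumes "finite_measure \<mu>" "sets \<mu> = sets (restrict_space borel X)" "compact X"
    "continuous_on X f"
  shows "integrable \<mu> f"
proof -
  obtain B where B: "\<forall>x\<in>X. norm (f x) \<le> B"
    using compact_imp_bounded[OF compact_continuous_image[OF assms(4,3)]]
    unfolding bounded_iff by auto
  have "f \<in> borel_measurable \<mu>"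
    using borel_measurable_continuous_on_restrict[OF assms(4)]
    unfolding measurable_cong_sets[OF assms(2) refl] .
  then show ?thesis
    using finite_measure.integrable_const_bound[OF assms(1), of f B] B
      space_eq_of_sets_restrict_borel[OF assms(2)] by auto
qed

locale finite_signed_measure_on =
  fixes X :: "'a::metric_space set" and \<mu>p \<mu>n :: "'a measure"
  assumes compact: "compact X"
    and finite: "finite_measure \<mu>p" "finite_measure \<mu>n"
    and sets: "sets \<mu>p = sets (restrict_space borel X)" "sets \<mu>n = sets (restrict_space borel X)"
begin

abbreviation signed_integral :: "('a \<Rightarrow> real) \<Rightarrow> real" where
  "signed_integral f \<equiv> (\<integral>t. f t \<partial>\<mu>p) - (\<integral>t. f t \<partial>\<mu>n)"

lemma integrable_continuous:
  fixes f :: "'a \<Rightarrow> real"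
  assumes "continuous_on X f"
  shows "integrable \<mu>p f" "integrable \<mu>n f"
  using integrable_continuous_on_compact[OF finite(1) sets(1) compact assms]
    integrable_continuous_on_compact[OF finite(2) sets(2) compact assms] by auto

lemma signed_integral_sum:
  fixes v :: "nat \<Rightarrow> 'a \<Rightarrow> real" and a :: "nat \<Rightarrow> real" and m :: nat
  assumes "\<And>k. continuous_on X (v k)"
  shows "signed_integral (\<lambda>t. \<Sum>k<m. a k * v k t) = (\<Sum>k<m. a k * signed_integral (v k))"
  using integrable_continuous[OF assms]
  by (simp add: integral_sum right_diff_distrib sum_subtractf)

text \<open>The bound is by mu_p(X) + mu_n(X).\<close>

lemma sum_abs_signed_integral_le:
  fixes m :: nat
  assumes cont: "\<And>k. continuous_on X (v k)"
    and l1: "\<And>t. t \<in> X \<Longrightarrow> (\<Sum>k<m. \<bar>v k t\<bar>) \<le> 1"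
  shows "(\<Sum>k<m. \<bar>signed_integral (v k)\<bar>) \<le> measure \<mu>p X + measure \<mu>n X"
proof -
  have abs_cont: "continuous_on X (\<lambda>t. \<bar>v k t\<bar>)" for k
    using cont by (intro continuous_intros)
  have sum_cont: "continuous_on X (\<lambda>t. \<Sum>k<m. \<bar>v k t\<bar>)"
    using abs_cont by (rule continuous_on_sum)
  have "(\<Sum>k<m. \<bar>signed_integral (v k)\<bar>)
      \<le> (\<Sum>k<m. (\<integral>t. \<bar>v k t\<bar> \<partial>\<mu>p) + (\<integral>t. \<bar>v k t\<bar> \<partial>\<mu>n))"
    by (intro sum_mono order.trans[OF abs_triangle_ineq4] add_mono integral_abs_bound)
  also have "\<dots> = (\<integral>t. (\<Sum>k<m. \<bar>v k t\<bar>) \<partial>\<mu>p) + (\<integral>t. (\<Sum>k<m. \<bar>v k t\<bar>) \<partial>\<mu>n)"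
    using integrable_continuous[OF abs_cont] by (simp add: sum.distrib integral_sum)
  also have "\<dots> \<le> (\<integral>t. 1 \<partial>\<mu>p) + (\<integral>t. 1 \<partial>\<mu>n)"
    using integrable_continuous[OF sum_cont] finite l1
      space_eq_of_sets_restrict_borel[OF sets(1)] space_eq_of_sets_restrict_borel[OF sets(2)]
    by (intro add_mono integral_mono) (auto intro: finite_measure.integrable_const)
  also have "\<dots> = measure \<mu>p X + measure \<mu>n X"
    using space_eq_of_sets_restrict_borel[OF sets(1)] space_eq_of_sets_restrict_borel[OF sets(2)]
    by simp
  finally show ?thesis .
qed

lemma kernel_fun_sample_representation:
  fixes m :: nat
  assumes "pd_kernel X K" "\<forall>x\<in>X. continuous_on X (\<lambda>t. K t x)" "kernel_l1_condition X K"
    and xs: "\<forall>i<m. xs i \<in> X" "inj_on xs {..<m}"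
  obtains c' where "\<And>j. j < m \<Longrightarrow> kernel_fun K \<mu>p \<mu>n (xs j) = (\<Sum>k<m. K (xs k) (xs j) * c' k)"
    and "(\<Sum>k<m. \<bar>c' k\<bar>) \<le> measure \<mu>p X + measure \<mu>n X"
proof -
  obtain v where cont: "\<And>k. continuous_on X (v k)"
    and sol: "\<And>j t. j < m \<Longrightarrow> (\<Sum>k<m. K (xs k) (xs j) * v k t) = K t (xs j)"
    using pd_kernel_interpolation_coefficients[OF assms(1) xs assms(2)] by blast
  have "kernel_fun K \<mu>p \<mu>n (xs j) = (\<Sum>k<m. K (xs k) (xs j) * signed_integral (v k))"
    if "j < m" for j
    using signed_integral_sum[of v "\<lambda>k. K (xs k) (xs j)" m, OF cont]
    by (simp add: sol[OF that] kernel_fun_def)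
  moreover have "(\<Sum>k<m. \<bar>v k t\<bar>) \<le> 1" if "t \<in> X" for t
    using assms(3)[unfolded kernel_l1_condition_def, rule_format, of m xs t "\<lambda>k. v k t"]
      xs sol that by auto
  then have "(\<Sum>k<m. \<bar>signed_integral (v k)\<bar>) \<le> measure \<mu>p X + measure \<mu>n X"
    by (rule sum_abs_signed_integral_le[OF cont])
  ultimately show thesis by (rule that)
qed

end

theorem lemma3p1:
  fixes X :: "'a::metric_space set" and Y :: "real set"
    and \<rho> :: "('a \<times> real) measure" and f\<rho> :: "'a \<Rightarrow> real"
    and K :: "'a \<Rightarrow> 'a \<Rightarrow> real"
    and m :: nat and xs :: "nat \<Rightarrow> 'a" and ys :: "nat \<Rightarrow> real"
    and lam :: real and c :: "nat \<Rightarrow> real"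
    and \<mu>p \<mu>n :: "'a measure"
  assumes X: "compact X" "X \<noteq> {}"
    and rho: "prob_space \<rho>" "sets \<rho> = sets (restrict_space borel (X \<times> Y))"
      "space \<rho> = X \<times> Y"
    and finite_err: "integrable \<rho> (\<lambda>z. (snd z)\<^sup>2)"
    and freg: "regression_fun X \<rho> f\<rho>"
    and Kpd: "pd_kernel X K"
    and Kcont: "\<forall>x\<in>X. continuous_on X (\<lambda>t. K t x)"
    and Kdense: "kernel_span_dense X K"
    and Kl1: "kernel_l1_condition X K"
    and sample: "m > 0" "\<forall>j<m. xs j \<in> X \<and> ys j \<in> Y" "inj_on xs {..<m}"
    and lam: "lam > 0"
    and cmin: "\<forall>c'::nat \<Rightarrow> real.
        (1 / real m) * (\<Sum>j<m. ((\<Sum>i<m. K (xs i) (xs j) * c i) - ys j)\<^sup>2) + lam * (\<Sum>i<m. \<bar>c i\<bar>)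
      \<le> (1 / real m) * (\<Sum>j<m. ((\<Sum>i<m. K (xs i) (xs j) * c' i) - ys j)\<^sup>2) + lam * (\<Sum>i<m. \<bar>c' i\<bar>)"
    and mu: "finite_measure \<mu>p" "finite_measure \<mu>n"
      "sets \<mu>p = sets (restrict_space borel X)" "sets \<mu>n = sets (restrict_space borel X)"
      "\<exists>A\<in>sets (restrict_space borel X). emeasure \<mu>p (X - A) = 0 \<and> emeasure \<mu>n A = 0"
  shows "gen_err \<rho> (\<lambda>x. \<Sum>i<m. K (xs i) x * c i) - gen_err \<rho> f\<rho>
     \<le> sampling_error \<rho> m xs ys (\<lambda>x. \<Sum>i<m. K (xs i) x * c i) (kernel_fun K \<mu>p \<mu>n)
       + regularization_error \<rho> f\<rho> lam (kernel_fun K \<mu>p \<mu>n) (measure \<mu>p X + measure \<mu>n X)"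
proof -
  let ?g = "kernel_fun K \<mu>p \<mu>n"
  interpret finite_signed_measure_on X \<mu>p \<mu>n
    using X(1) mu(1-4) by (simp add: finite_signed_measure_on_def)
  obtain c' where g_sample: "\<And>j. j < m \<Longrightarrow> ?g (xs j) = (\<Sum>k<m. K (xs k) (xs j) * c' k)"
    and c'_norm: "(\<Sum>k<m. \<bar>c' k\<bar>) \<le> measure \<mu>p X + measure \<mu>n X"
    using kernel_fun_sample_representation[OF Kpd Kcont Kl1] sample by blast
  have emp_g: "emp_err m xs ys ?g
      = (1 / real m) * (\<Sum>j<m. ((\<Sum>i<m. K (xs i) (xs j) * c' i) - ys j)\<^sup>2)"
    unfolding emp_err_def using g_sample by simp
  have "emp_err m xs ys (\<lambda>x. \<Sum>i<m. K (xs i) x * c i) + lam * (\<Sum>i<m. \<bar>c i\<bar>)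
      \<le> emp_err m xs ys ?g + lam * (\<Sum>i<m. \<bar>c' i\<bar>)"
    using cmin[rule_format, of c'] unfolding emp_g by (simp add: emp_err_def)
  also have "\<dots> \<le> emp_err m xs ys ?g + lam * (measure \<mu>p X + measure \<mu>n X)"
    using c'_norm lam by simp
  finally have "emp_err m xs ys (\<lambda>x. \<Sum>i<m. K (xs i) x * c i) + lam * (\<Sum>i<m. \<bar>c i\<bar>)
      \<le> emp_err m xs ys ?g + lam * (measure \<mu>p X + measure \<mu>n X)" .
  moreover have "lam * (\<Sum>i<m. \<bar>c i\<bar>) \<ge> 0" using lam by (simp add: sum_nonneg)
  ultimately show ?thesis
    unfolding sampling_error_def regularization_error_def by linarith
qed

end
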